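(* Let $\Gamma$ be a compact abelian group (written multiplicatively) such that for every $a\in\mathbb{N}^{\times}$ the subgroup $\omega_a(\Gamma)$ has finite index in $\Gamma$, the kernel $\ker\omega_a$ is finite, and $|\ker\omega_{ab}|=|\ker\omega_a|\cdot|\ker\omega_b|$ for all $a,b\in\mathbb{N}^{\times}$, where $\omega_a(g)=g^a$. For $a\in\mathbb{N}^{\times}$ let $\Gamma_a:=\{(a,g):g\in\Gamma\}$, and give $\Lambda_\Gamma:=\bigcup_{a\in\mathbb{N}^{\times}}\Gamma_a$ the topology in which each $\Gamma_a$ is a compact open copy of $\Gamma$. Define $r,s:\Lambda_\Gamma\to\Lambda^1:=\Gamma$ and $d:\Lambda_\Gamma\to\mathbb{N}^{\times}$ by $r(a,g)=g$, $s(a,g)=g^a$, $d(a,g)=a$, and define composition by $(a,g)(b,g^a):=(ab,g)$ (the element $(1,g)$ being identified with the object $g$). Then $\Lambda=(\Gamma,\Lambda_\Gamma,r,s,d)$ is a topological $\mathbb{N}^{\times}$-graph, and it is row-finite and has no sources.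
   Context: $\mathbb{N}^{\times}=\{a\in\mathbb{Z}:a>0\}$ is the multiplicative semigroup of positive integers. A topological $\mathbb{N}^{\times}$-graph (a topological higher-rank graph in Yamashita's sense, with degree semigroup $\mathbb{N}^{\times}\cong\mathbb{N}^\infty$ written multiplicatively) is a small category $\Lambda$ whose object set $\Lambda^1$ and morphism set are topological spaces (locally compact Hausdorff), together with a functor $d$ (the degree) from $\Lambda$ to $\mathbb{N}^{\times}$, such that: the range map $r$ is continuous, the source map $s$ is a local homeomorphism, $d$ is continuous, composition is continuous and open, and the factorisation property holds: if $d(\lambda)=ab$ then there are unique $\mu,\nu$ with $d(\mu)=a$, $d(\nu)=b$ and $\lambda=\mu\nu$. Write $\Lambda^a=d^{-1}(a)$. $\Lambda$ is row-finite with no sources if each $r|_{\Lambda^a}:\Lambda^a\to\Lambda^1$ is proper and surjective. *)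

theory Defs
  imports "HOL-Analysis.Analysis" "HOL-Algebra.Algebra"
begin

definition Nx :: "nat set" where "Nx = {a. 0 < a}"

definition local_homeo_map :: "'a topology \<Rightarrow> 'b topology \<Rightarrow> ('a \<Rightarrow> 'b) \<Rightarrow> bool" where
  "local_homeo_map Tx Ty f \<longleftrightarrow>
     f ` topspace Tx \<subseteq> topspace Ty \<and>
     (\<forall>x \<in> topspace Tx. \<exists>U. openin Tx U \<and> x \<in> U \<and> openin Ty (f ` U) \<and>
        homeomorphic_map (subtopology Tx U) (subtopology Ty (f ` U)) f)"

text \<open>The category is given by its space of
  morphisms (topology \<open>T\<close>); objects are identified with the identity morphisms,
  which are exactly the morphisms of degree 1, i.e. \<open>\<Lambda>\<^sup>1\<close>.  Composition
  \<open>cmp \<lambda> \<mu>\<close> (meaning \<open>\<lambda>\<mu>\<close>) is only relevant on composable pairs \<open>s \<lambda> = r \<mu>\<close>.\<close>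

definition obj_space :: "'m topology \<Rightarrow> ('m \<Rightarrow> nat) \<Rightarrow> 'm set" where
  "obj_space T d = {v \<in> topspace T. d v = 1}"

definition composable :: "'m topology \<Rightarrow> ('m \<Rightarrow> 'm) \<Rightarrow> ('m \<Rightarrow> 'm) \<Rightarrow> ('m \<times> 'm) set" where
  "composable T r s = {(l, m). l \<in> topspace T \<and> m \<in> topspace T \<and> s l = r m}"

definition topological_Nx_graph ::
  "'m topology \<Rightarrow> ('m \<Rightarrow> 'm) \<Rightarrow> ('m \<Rightarrow> 'm) \<Rightarrow> ('m \<Rightarrow> 'm \<Rightarrow> 'm) \<Rightarrow> ('m \<Rightarrow> nat) \<Rightarrow> bool" where
  "topological_Nx_graph T r s cmp d \<longleftrightarrow>
    (let L = topspace T; Ob = obj_space T d; C = composable T r s in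
     \<comment> \<open>small category with object set \<open>Ob\<close> (identities)\<close>
     (\<forall>l \<in> L. r l \<in> Ob \<and> s l \<in> Ob) \<and>
     (\<forall>v \<in> Ob. r v = v \<and> s v = v) \<and>
     (\<forall>(l, m) \<in> C. cmp l m \<in> L \<and> r (cmp l m) = r l \<and> s (cmp l m) = s m) \<and>
     (\<forall>l \<in> L. cmp (r l) l = l \<and> cmp l (s l) = l) \<and>
     (\<forall>l \<in> L. \<forall>m \<in> L. \<forall>n \<in> L. s l = r m \<and> s m = r n \<longrightarrow>
          cmp (cmp l m) n = cmp l (cmp m n)) \<and>
     \<comment> \<open>degree functor into \<open>\<nat>\<^sup>\<times>\<close>\<close>
     (\<forall>l \<in> L. d l \<in> Nx) \<and>
     (\<forall>(l, m) \<in> C. d (cmp l m) = d l * d m) \<and>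
     \<comment> \<open>topology\<close>
     Hausdorff_space T \<and> locally_compact_space T \<and>
     Hausdorff_space (subtopology T Ob) \<and> locally_compact_space (subtopology T Ob) \<and>
     continuous_map T (subtopology T Ob) r \<and>
     local_homeo_map T (subtopology T Ob) s \<and>
     continuous_map T (discrete_topology Nx) d \<and>
     continuous_map (subtopology (prod_topology T T) C) T (\<lambda>(l, m). cmp l m) \<and>
     open_map (subtopology (prod_topology T T) C) T (\<lambda>(l, m). cmp l m) \<and>
     \<comment> \<open>unique factorisation\<close>
     (\<forall>l \<in> L. \<forall>a \<in> Nx. \<forall>b \<in> Nx. d l = a * b \<longrightarrow>
        (\<exists>!(m, n). (m, n) \<in> C \<and> d m = a \<and> d n = b \<and> l = cmp m n)))"

definition row_finite_no_sources ::
  "'m topology \<Rightarrow> ('m \<Rightarrow> 'm) \<Rightarrow> ('m \<Rightarrow> nat) \<Rightarrow> bool" where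
  "row_finite_no_sources T r d \<longleftrightarrow>
    (\<forall>a \<in> Nx. proper_map (subtopology T {l \<in> topspace T. d l = a})
                          (subtopology T (obj_space T d)) r \<and>
              r ` {l \<in> topspace T. d l = a} = obj_space T d)"

definition Lam_top :: "'g topology \<Rightarrow> (nat \<times> 'g) topology" where
  "Lam_top Tx = prod_topology (discrete_topology Nx) Tx"

definition Lam_r :: "nat \<times> 'g \<Rightarrow> nat \<times> 'g" where
  "Lam_r = (\<lambda>(a, g). (1, g))"

definition Lam_s :: "('g, 'b) monoid_scheme \<Rightarrow> nat \<times> 'g \<Rightarrow> nat \<times> 'g" where
  "Lam_s G = (\<lambda>(a, g). (1, g [^]\<^bsub>G\<^esub> a))"

definition Lam_d :: "nat \<times> 'g \<Rightarrow> nat" where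
  "Lam_d = fst"

definition Lam_comp :: "nat \<times> 'g \<Rightarrow> nat \<times> 'g \<Rightarrow> nat \<times> 'g" where
  "Lam_comp = (\<lambda>(a, g) (b, h). (a * b, g))"

definition pow_ker :: "('g, 'b) monoid_scheme \<Rightarrow> nat \<Rightarrow> 'g set" where
  "pow_ker G a = {g \<in> carrier G. g [^]\<^bsub>G\<^esub> a = \<one>\<^bsub>G\<^esub>}"

definition pow_image :: "('g, 'b) monoid_scheme \<Rightarrow> nat \<Rightarrow> 'g set" where
  "pow_image G a = (\<lambda>g. g [^]\<^bsub>G\<^esub> a) ` carrier G"

end

theory Submission
  imports Defs
begin

text \<open>Being continuous from a compact to a Hausdorff space, \<open>\<omega>\<^sub>a\<close> is closed, so
  \<open>\<omega>\<^sub>a(\<Gamma>)\<close> is a closed subgroup of finite index and therefore open. The \<open>\<omega>\<^sub>a\<close>-saturation of an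
  open set is a union of translates, hence open, so \<open>\<omega>\<^sub>a\<close> is an open map. Finally \<open>ker \<omega>\<^sub>a\<close>
  is finite, hence discrete, so \<open>\<omega>\<^sub>a\<close> is injective near every point. On the compact open
  slice \<open>\<Gamma>\<^sub>a\<close> the source map is \<open>\<omega>\<^sub>a\<close>, so it is a local homeomorphism, and the range map is
  a continuous bijection of \<open>\<Gamma>\<^sub>a\<close> onto \<open>\<Gamma>\<close>, hence proper. The category laws and the unique
  factorisation \<open>(ab, g) = (a, g)(b, g\<^sup>a)\<close> are immediate.\<close>

lemma local_homeo_mapI:
  assumes cont: "continuous_map Tx Ty f" and open_f: "open_map Tx Ty f"
    and loc_inj: "\<And>x. x \<in> topspace Tx \<Longrightarrow> \<exists>U. openin Tx U \<and> x \<in> U \<and> inj_on f U"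
  shows "local_homeo_map Tx Ty f"
  unfolding local_homeo_map_def
proof (intro conjI ballI)
  show "f ` topspace Tx \<subseteq> topspace Ty"
    using cont by (simp add: continuous_map_image_subset_topspace)
  fix x assume "x \<in> topspace Tx"
  then obtain U where U: "openin Tx U" "x \<in> U" "inj_on f U"
    using loc_inj by blast
  have fU: "openin Ty (f ` U)"
    using open_f U(1) by (simp add: open_map_def)
  have "homeomorphic_map (subtopology Tx U) (subtopology Ty (f ` U)) f"
  proof (rule bijective_open_imp_homeomorphic_map)
    show "continuous_map (subtopology Tx U) (subtopology Ty (f ` U)) f"
      by (intro continuous_map_into_subtopology continuous_map_from_subtopology cont)
        (use openin_subset[OF U(1)] in auto)
    show "open_map (subtopology Tx U) (subtopology Ty (f ` U)) f"
      by (intro open_map_into_subtopology open_map_from_subtopology open_f U(1))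
        (use openin_subset[OF U(1)] in auto)
    show "f ` topspace (subtopology Tx U) = topspace (subtopology Ty (f ` U))"
      using openin_subset[OF U(1)] openin_subset[OF fU] by (auto simp: Int_absorb1)
    show "inj_on f (topspace (subtopology Tx U))"
      using U(3) by (simp add: inj_on_Int)
  qed
  then show "\<exists>U. openin Tx U \<and> x \<in> U \<and> openin Ty (f ` U) \<and>
      homeomorphic_map (subtopology Tx U) (subtopology Ty (f ` U)) f"
    using U fU by blast
qed

section \<open>Topological groups\<close>

locale topological_group = group G for G :: "('g, 'b) monoid_scheme" (structure) +
  fixes Tx :: "'g topology"
  assumes topspace_eq [simp]: "topspace Tx = carrier G"
    and continuous_map_mult: "continuous_map (prod_topology Tx Tx) Tx (\<lambda>(x, y). x \<otimes> y)"
    and continuous_map_inv: "continuous_map Tx Tx (\<lambda>x. inv x)"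
begin

lemma continuous_map_mult_pointwise:
  assumes "continuous_map Ty Tx f" "continuous_map Ty Tx g"
  shows "continuous_map Ty Tx (\<lambda>y. f y \<otimes> g y)"
  using continuous_map_compose[OF continuous_map_pairedI[OF assms] continuous_map_mult]
  by (simp add: o_def)

lemma continuous_map_nat_pow: "continuous_map Tx Tx (\<lambda>x. x [^] (n::nat))"
  by (induction n) (simp_all add: continuous_map_mult_pointwise)

lemma continuous_map_div: "continuous_map (prod_topology Tx Tx) Tx (\<lambda>(x, y). x \<otimes> inv y)"
  unfolding case_prod_unfold
  by (intro continuous_map_mult_pointwise continuous_map_fst
      continuous_map_compose[OF continuous_map_snd continuous_map_inv, unfolded o_def])

lemma r_coset_eq_preimage:
  assumes "S \<subseteq> carrier G" "y \<in> carrier G"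
  shows "S #> y = {x \<in> topspace Tx. x \<otimes> inv y \<in> S}"
  using assms by (force simp: r_coset_def m_assoc)

lemma continuous_map_mult_right: "y \<in> carrier G \<Longrightarrow> continuous_map Tx Tx (\<lambda>x. x \<otimes> y)"
  by (intro continuous_map_mult_pointwise continuous_map_id[unfolded id_def]) simp

lemma openin_r_coset:
  assumes "openin Tx S" "y \<in> carrier G"
  shows "openin Tx (S #> y)"
  using openin_continuous_map_preimage[OF continuous_map_mult_right[of "inv y"] assms(1)]
    assms openin_subset[OF assms(1)]
  by (simp add: r_coset_eq_preimage)

lemma closedin_r_coset:
  assumes "closedin Tx S" "y \<in> carrier G"
  shows "closedin Tx (S #> y)"
  using closedin_continuous_map_preimage[OF continuous_map_mult_right[of "inv y"] assms(1)]
    assms closedin_subset[OF assms(1)]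
  by (simp add: r_coset_eq_preimage)

lemma openin_subgroup_of_finite_index:
  assumes H: "subgroup H G" "closedin Tx H" and fin: "finite (rcosets H)"
  shows "openin Tx H"
proof -
  have "carrier G - H = \<Union> (rcosets H - {H})"
  proof
    show "carrier G - H \<subseteq> \<Union> (rcosets H - {H})"
    proof
      fix x assume x: "x \<in> carrier G - H"
      then have "x \<in> H #> x" "H #> x \<in> rcosets H"
        using H(1) by (auto intro: rcos_self rcosetsI[OF subgroup.subset])
      moreover have "H #> x \<noteq> H"
        using x \<open>x \<in> H #> x\<close> by auto
      ultimately show "x \<in> \<Union> (rcosets H - {H})" by blast
    qed
    have "disjnt C H" if "C \<in> rcosets H - {H}" for C
      using rcos_disjoint[OF H(1)] subgroup.subgroup_in_rcosets[OF H(1) is_group] that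
      by (auto simp: pairwise_def)
    then show "\<Union> (rcosets H - {H}) \<subseteq> carrier G - H"
      using rcosets_part_G[OF H(1)] by (auto simp: disjnt_def)
  qed
  moreover have "closedin Tx (\<Union> (rcosets H - {H}))"
    using fin H(2) by (intro closedin_Union) (auto simp: RCOSETS_def closedin_r_coset)
  ultimately show ?thesis
    using subgroup.subset[OF H(1)] by (simp add: openin_closedin_eq Diff_Diff_Int Int_absorb1)
qed

end

section \<open>Power maps of a compact abelian group\<close>

locale compact_abelian_group = topological_group + comm_group G +
  assumes compact_space: "compact_space Tx" and Hausdorff: "Hausdorff_space Tx"
begin

lemma group_hom_nat_pow: "group_hom G G (\<lambda>x. x [^] (n::nat))"
  by (intro group_hom.intro group_hom_axioms.intro is_group) (auto simp: hom_def nat_pow_distrib)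

lemma subgroup_pow_image: "subgroup (pow_image G n) G"
  unfolding pow_image_def by (rule group_hom.img_is_subgroup[OF group_hom_nat_pow])

lemma closed_map_nat_pow: "closed_map Tx Tx (\<lambda>x. x [^] (n::nat))"
  by (intro continuous_imp_closed_map_gen compact_space Hausdorff_imp_kc_space Hausdorff
      continuous_map_nat_pow)

lemma closedin_pow_image: "closedin Tx (pow_image G n)"
  using closed_map_nat_pow[of n] closedin_topspace[of Tx]
  by (simp add: closed_map_def pow_image_def)

lemma openin_pow_image: "finite (rcosets (pow_image G n)) \<Longrightarrow> openin Tx (pow_image G n)"
  by (intro openin_subgroup_of_finite_index subgroup_pow_image closedin_pow_image)

lemma nat_pow_eq_iff_pow_ker:
  assumes "x \<in> carrier G" "y \<in> carrier G"
  shows "x [^] n = y [^] n \<longleftrightarrow> x \<otimes> inv y \<in> pow_ker G n"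
proof -
  have "(x \<otimes> inv y) [^] n = x [^] n \<otimes> inv (y [^] n)"
    using assms by (simp add: nat_pow_distrib nat_pow_inv)
  then show ?thesis
    using assms by (simp add: pow_ker_def inv_solve_right')
qed

lemma nat_pow_preimage_image:
  assumes "W \<subseteq> carrier G"
  shows "{z \<in> carrier G. z [^] n \<in> (\<lambda>x. x [^] n) ` W} = (\<Union>k \<in> pow_ker G n. W #> k)"
proof (intro equalityI subsetI)
  fix z assume "z \<in> {z \<in> carrier G. z [^] n \<in> (\<lambda>x. x [^] n) ` W}"
  then obtain w where z: "z \<in> carrier G" and w: "w \<in> W" "z [^] n = w [^] n" by blast
  have "w \<in> carrier G" using w assms by blast
  then have "z \<otimes> inv w \<in> pow_ker G n" "z = w \<otimes> (z \<otimes> inv w)"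
    using nat_pow_eq_iff_pow_ker[OF z] w z by (simp_all add: m_lcomm[of w z "inv w"])
  then show "z \<in> (\<Union>k \<in> pow_ker G n. W #> k)"
    using w by (auto simp: r_coset_def)
next
  fix z assume "z \<in> (\<Union>k \<in> pow_ker G n. W #> k)"
  then obtain k w where "k \<in> pow_ker G n" "w \<in> W" "z = w \<otimes> k"
    by (auto simp: r_coset_def)
  moreover have "w \<in> carrier G" using \<open>w \<in> W\<close> assms by blast
  ultimately show "z \<in> {z \<in> carrier G. z [^] n \<in> (\<lambda>x. x [^] n) ` W}"
    by (auto simp: pow_ker_def nat_pow_distrib)
qed

text \<open>The saturation \<open>S\<close> of \<open>W\<close> is open, and the power map sends its complement onto the
  complement of the image of \<open>W\<close> in the open subgroup \<open>pow_image G n\<close>.\<close>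
lemma open_map_nat_pow:
  assumes "finite (rcosets (pow_image G n))"
  shows "open_map Tx Tx (\<lambda>x. x [^] n)"
  unfolding open_map_def
proof (intro allI impI)
  let ?f = "\<lambda>x. x [^] n"
  fix W assume W: "openin Tx W"
  define S where "S = {z \<in> carrier G. ?f z \<in> ?f ` W}"
  have "W \<subseteq> carrier G" using openin_subset[OF W] by simp
  then have image_eq: "?f ` W = pow_image G n - ?f ` (carrier G - S)"
    by (auto simp: S_def pow_image_def) (metis rev_image_eqI)
  have "openin Tx S"
    unfolding S_def nat_pow_preimage_image[OF \<open>W \<subseteq> carrier G\<close>]
    using W by (intro openin_Union) (auto simp: pow_ker_def openin_r_coset)
  then have "closedin Tx (carrier G - S)"
    using closedin_diff[OF closedin_topspace \<open>openin Tx S\<close>] by simp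
  then have "closedin Tx (?f ` (carrier G - S))"
    using closed_map_nat_pow by (simp add: closed_map_def)
  then show "openin Tx (?f ` W)"
    unfolding image_eq using openin_pow_image[OF assms] by (rule openin_diff[rotated])
qed

lemma locally_inj_on_nat_pow:
  assumes fin: "finite (pow_ker G n)" and g: "g \<in> carrier G"
  shows "\<exists>U. openin Tx U \<and> g \<in> U \<and> inj_on (\<lambda>x. x [^] n) U"
proof -
  let ?K = "pow_ker G n - {\<one>}"
  have "closedin Tx ?K"
    using fin by (intro closedin_Hausdorff_finite Hausdorff) (auto simp: pow_ker_def)
  define P where "P = {p \<in> topspace (prod_topology Tx Tx). (\<lambda>(x, y). x \<otimes> inv y) p \<in> topspace Tx - ?K}"
  have P: "openin (prod_topology Tx Tx) P"
    unfolding P_def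
    by (intro openin_continuous_map_preimage[OF continuous_map_div]
        openin_diff[OF openin_topspace \<open>closedin Tx ?K\<close>])
  have "(g, g) \<in> P"
    using g by (simp add: P_def)
  then obtain U V where UV: "openin Tx U" "openin Tx V" "g \<in> U" "g \<in> V" "U \<times> V \<subseteq> P"
    using P[unfolded openin_prod_topology_alt] by force
  have "inj_on (\<lambda>x. x [^] n) (U \<inter> V)"
  proof (rule inj_onI)
    fix x y assume "x \<in> U \<inter> V" "y \<in> U \<inter> V" "x [^] n = y [^] n"
    then have "x \<in> carrier G" "y \<in> carrier G" "x \<otimes> inv y \<in> pow_ker G n - ?K"
      using UV(5) nat_pow_eq_iff_pow_ker by (auto simp: P_def)
    then show "x = y" by (simp add: inv_solve_right')
  qed
  then show ?thesis
    using UV by (intro exI[of _ "U \<inter> V"]) (simp add: openin_Int)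
qed

end

section \<open>The graph \<open>\<Lambda>\<^sub>\<Gamma>\<close>\<close>

lemma Lam_r_apply [simp]: "Lam_r (a, g) = (1, g)"
  by (simp add: Lam_r_def)

lemma Lam_s_apply [simp]: "Lam_s G (a, g) = (1, g [^]\<^bsub>G\<^esub> a)"
  by (simp add: Lam_s_def)

lemma Lam_comp_apply [simp]: "Lam_comp (a, g) (b, h) = (a * b, g)"
  by (simp add: Lam_comp_def)

lemma Lam_d_apply [simp]: "Lam_d (a, g) = a"
  by (simp add: Lam_d_def)

lemma topspace_Lam_top [simp]: "topspace (Lam_top Tx) = Nx \<times> topspace Tx"
  by (simp add: Lam_top_def)

lemma openin_Lam_top_Times: "a \<in> Nx \<Longrightarrow> openin Tx W \<Longrightarrow> openin (Lam_top Tx) ({a} \<times> W)"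
  by (auto simp: Lam_top_def openin_prod_Times_iff)

lemma continuous_map_into_Lam_top:
  "a \<in> Nx \<Longrightarrow> continuous_map Ty Tx f \<Longrightarrow> continuous_map Ty (Lam_top Tx) (\<lambda>y. (a, f y))"
  unfolding Lam_top_def by (intro continuous_map_pairedI) auto

lemma openin_Lam_top:
  "openin (Lam_top Tx) S \<longleftrightarrow> S \<subseteq> Nx \<times> topspace Tx \<and> (\<forall>a \<in> Nx. openin Tx {g. (a, g) \<in> S})"
proof
  assume S: "openin (Lam_top Tx) S"
  then have sub: "S \<subseteq> Nx \<times> topspace Tx"
    using openin_subset by fastforce
  have "openin Tx {g \<in> topspace Tx. (a, g) \<in> S}" if "a \<in> Nx" for a
    using openin_continuous_map_preimage[OF continuous_map_into_Lam_top[OF that continuous_map_id] S]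
    by simp
  moreover have "{g \<in> topspace Tx. (a, g) \<in> S} = {g. (a, g) \<in> S}" for a
    using sub by auto
  ultimately show "S \<subseteq> Nx \<times> topspace Tx \<and> (\<forall>a \<in> Nx. openin Tx {g. (a, g) \<in> S})"
    using sub by simp
next
  assume S: "S \<subseteq> Nx \<times> topspace Tx \<and> (\<forall>a \<in> Nx. openin Tx {g. (a, g) \<in> S})"
  then have "S = (\<Union>a \<in> Nx. {a} \<times> {g. (a, g) \<in> S})"
    by auto
  moreover have "openin (Lam_top Tx) (\<Union>a \<in> Nx. {a} \<times> {g. (a, g) \<in> S})"
    using S by (intro openin_Union) (auto intro: openin_Lam_top_Times)
  ultimately show "openin (Lam_top Tx) S"
    by simp
qed

lemma continuous_map_from_Lam_top:
  assumes "\<And>a. a \<in> Nx \<Longrightarrow> continuous_map Tx Ty (\<lambda>g. h (a, g))"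
  shows "continuous_map (Lam_top Tx) Ty h"
  unfolding continuous_map_def
proof (intro conjI allI impI)
  show "h \<in> topspace (Lam_top Tx) \<rightarrow> topspace Ty"
    using assms by (auto simp: continuous_map_def)
  fix U assume "openin Ty U"
  then have "openin Tx {g \<in> topspace Tx. h (a, g) \<in> U}" if "a \<in> Nx" for a
    using openin_continuous_map_preimage[OF assms[OF that]] by blast
  then show "openin (Lam_top Tx) {l \<in> topspace (Lam_top Tx). h l \<in> U}"
    unfolding openin_Lam_top by auto
qed

lemma open_map_from_Lam_top:
  assumes "\<And>a. a \<in> Nx \<Longrightarrow> open_map Tx Ty (\<lambda>g. h (a, g))"
  shows "open_map (Lam_top Tx) Ty h"
  unfolding open_map_def
proof (intro allI impI)
  fix S assume S: "openin (Lam_top Tx) S"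
  then have "h ` S = (\<Union>a \<in> Nx. (\<lambda>g. h (a, g)) ` {g. (a, g) \<in> S})"
    using openin_subset[OF S] by auto
  moreover have "openin Ty ((\<lambda>g. h (a, g)) ` {g. (a, g) \<in> S})" if "a \<in> Nx" for a
    using assms[OF that] S that by (simp add: open_map_def openin_Lam_top)
  ultimately show "openin Ty (h ` S)"
    by (metis (no_types, lifting) imageE openin_Union)
qed

lemma image_Pair_left: "(\<lambda>g. (a, g)) ` W = {a} \<times> W"
  by auto

lemma open_map_into_Lam_top: "a \<in> Nx \<Longrightarrow> open_map Tx (Lam_top Tx) (\<lambda>g. (a, g))"
  by (simp add: open_map_def image_Pair_left openin_Lam_top_Times)

lemma compactin_Lam_top_slice:
  "compact_space Tx \<Longrightarrow> a \<in> Nx \<Longrightarrow> compactin (Lam_top Tx) ({a} \<times> topspace Tx)"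
  using image_compactin[OF _ continuous_map_into_Lam_top[OF _ continuous_map_id]]
  by (simp add: compact_space_def flip: image_Pair_left)

lemma Hausdorff_space_Lam_top: "Hausdorff_space Tx \<Longrightarrow> Hausdorff_space (Lam_top Tx)"
  by (simp add: Lam_top_def Hausdorff_space_prod_topology)

lemma locally_compact_space_Lam_top:
  "locally_compact_space Tx \<Longrightarrow> locally_compact_space (Lam_top Tx)"
  by (simp add: Lam_top_def locally_compact_space_prod_topology locally_compact_space_discrete_topology)

lemma obj_space_Lam: "obj_space (Lam_top Tx) Lam_d = {1} \<times> topspace Tx"
  by (auto simp: obj_space_def Lam_d_def Nx_def)

lemma composable_Lam_iff:
  "((a, g), (b, h)) \<in> composable (Lam_top Tx) Lam_r (Lam_s G) \<longleftrightarrow>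
     a \<in> Nx \<and> b \<in> Nx \<and> g \<in> topspace Tx \<and> h \<in> topspace Tx \<and> h = g [^]\<^bsub>G\<^esub> a"
  by (auto simp: composable_def)

lemma continuous_map_Lam_r:
  "continuous_map (Lam_top Tx) (subtopology (Lam_top Tx) (obj_space (Lam_top Tx) Lam_d)) Lam_r"
  unfolding obj_space_Lam
  by (intro continuous_map_into_subtopology continuous_map_from_Lam_top)
    (auto simp: Nx_def intro: continuous_map_into_Lam_top[OF _ continuous_map_id[unfolded id_def]])

lemma continuous_map_Lam_d: "continuous_map (Lam_top Tx) (discrete_topology Nx) Lam_d"
  unfolding Lam_d_def Lam_top_def by (rule continuous_map_fst)

lemma continuous_map_Lam_comp:
  "continuous_map (subtopology (prod_topology (Lam_top Tx) (Lam_top Tx)) C) (Lam_top Tx)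
     (\<lambda>(l, m). Lam_comp l m)"
proof -
  let ?P = "prod_topology (Lam_top Tx) (Lam_top Tx)"
  have "continuous_map ?P (discrete_topology (Nx \<times> Nx)) (\<lambda>(l, m). (Lam_d l, Lam_d m))"
    unfolding prod_topology_discrete_topology case_prod_unfold
    by (intro continuous_map_pairedI
        continuous_map_compose[OF continuous_map_fst continuous_map_Lam_d, unfolded o_def]
        continuous_map_compose[OF continuous_map_snd continuous_map_Lam_d, unfolded o_def])
  then have "continuous_map ?P (discrete_topology Nx) (\<lambda>(l, m). Lam_d l * Lam_d m)"
    using continuous_map_compose[of _ _ _ "discrete_topology Nx" "\<lambda>(a, b). a * b"]
    by (fastforce simp: o_def case_prod_unfold Nx_def)
  moreover have "continuous_map ?P Tx (\<lambda>(l, m). snd l)"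
    unfolding case_prod_unfold Lam_top_def
    by (intro continuous_map_compose[OF continuous_map_fst continuous_map_snd, unfolded o_def])
  ultimately have "continuous_map ?P (Lam_top Tx) (\<lambda>(l, m). (Lam_d l * Lam_d m, snd l))"
    unfolding Lam_top_def case_prod_unfold by (intro continuous_map_pairedI)
  moreover have "(\<lambda>(l, m). Lam_comp l m) = (\<lambda>(l, m). (Lam_d l * Lam_d m, snd l))"
    by (auto simp: Lam_comp_def Lam_d_def fun_eq_iff)
  ultimately show ?thesis
    by (metis continuous_map_from_subtopology)
qed

lemma row_finite_no_sources_Lam:
  assumes "compact_space Tx" "Hausdorff_space Tx"
  shows "row_finite_no_sources (Lam_top Tx) Lam_r Lam_d"
  unfolding row_finite_no_sources_def
proof (intro ballI conjI)
  fix a assume a: "a \<in> Nx"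
  have slice: "{l \<in> topspace (Lam_top Tx). Lam_d l = a} = {a} \<times> topspace Tx"
    using a by (auto simp: Lam_d_def)
  show "proper_map (subtopology (Lam_top Tx) {l \<in> topspace (Lam_top Tx). Lam_d l = a})
      (subtopology (Lam_top Tx) (obj_space (Lam_top Tx) Lam_d)) Lam_r"
    unfolding slice
    by (intro continuous_imp_proper_map compact_space_subtopology compactin_Lam_top_slice
        Hausdorff_imp_kc_space Hausdorff_space_subtopology Hausdorff_space_Lam_top
        continuous_map_from_subtopology continuous_map_Lam_r assms a)
  show "Lam_r ` {l \<in> topspace (Lam_top Tx). Lam_d l = a} = obj_space (Lam_top Tx) Lam_d"
    unfolding slice obj_space_Lam by (force simp: Lam_r_def)
qed

context topological_group
begin

lemma Lam_unique_factorisation: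
  assumes "l \<in> topspace (Lam_top Tx)" "a \<in> Nx" "b \<in> Nx" "Lam_d l = a * b"
  shows "\<exists>!(m, n). (m, n) \<in> composable (Lam_top Tx) Lam_r (Lam_s G) \<and>
           Lam_d m = a \<and> Lam_d n = b \<and> l = Lam_comp m n"
proof -
  obtain g where l: "l = (a * b, g)" "g \<in> carrier G"
    using assms by (cases l) (auto simp: Lam_d_def)
  show ?thesis
    by (rule ex1I[of _ "((a, g), (b, g [^] a))"])
      (use assms l in \<open>auto simp: composable_Lam_iff Lam_d_def\<close>)
qed

lemma open_map_Lam_comp:
  "open_map (subtopology (prod_topology (Lam_top Tx) (Lam_top Tx)) (composable (Lam_top Tx) Lam_r (Lam_s G)))
     (Lam_top Tx) (\<lambda>(l, m). Lam_comp l m)"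
  unfolding open_map_def
proof (intro allI impI)
  let ?C = "composable (Lam_top Tx) Lam_r (Lam_s G)" and ?c = "\<lambda>(l, m). Lam_comp l m"
  fix W assume "openin (subtopology (prod_topology (Lam_top Tx) (Lam_top Tx)) ?C) W"
  then obtain V where V: "openin (prod_topology (Lam_top Tx) (Lam_top Tx)) V" and W: "W = V \<inter> ?C"
    by (auto simp: openin_subtopology)
  have slice: "{x. (n, x) \<in> ?c ` W} =
      (\<Union>(a, b) \<in> {(a, b) \<in> Nx \<times> Nx. a * b = n}. {x \<in> topspace Tx. ((a, x), (b, x [^] a)) \<in> V})"
    for n
    unfolding W by (force simp: composable_Lam_iff)
  have "openin Tx {x \<in> topspace Tx. ((a, x), (b, x [^] a)) \<in> V}" if "a \<in> Nx" "b \<in> Nx" for a b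
    by (intro openin_continuous_map_preimage[OF _ V] continuous_map_pairedI that
        continuous_map_into_Lam_top continuous_map_id[unfolded id_def] continuous_map_nat_pow)
  then have "openin Tx {x. (n, x) \<in> ?c ` W}" for n
    unfolding slice by (intro openin_Union) auto
  moreover have "?c ` W \<subseteq> Nx \<times> topspace Tx"
    unfolding W by (auto simp: composable_Lam_iff Nx_def)
  ultimately show "openin (Lam_top Tx) (?c ` W)"
    by (simp add: openin_Lam_top)
qed

end

context compact_abelian_group
begin

lemma local_homeo_map_Lam_s:
  assumes fin_index: "\<And>a. a \<in> Nx \<Longrightarrow> finite (rcosets (pow_image G a))"
    and fin_ker: "\<And>a. a \<in> Nx \<Longrightarrow> finite (pow_ker G a)"
  shows "local_homeo_map (Lam_top Tx) (subtopology (Lam_top Tx) (obj_space (Lam_top Tx) Lam_d)) (Lam_s G)"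
proof (rule local_homeo_mapI)
  show "continuous_map (Lam_top Tx) (subtopology (Lam_top Tx) (obj_space (Lam_top Tx) Lam_d)) (Lam_s G)"
    unfolding obj_space_Lam
    by (intro continuous_map_into_subtopology continuous_map_from_Lam_top)
      (auto simp: Nx_def intro: continuous_map_into_Lam_top continuous_map_nat_pow)
  have "open_map Tx (Lam_top Tx) (\<lambda>g. Lam_s G (a, g))" if "a \<in> Nx" for a
    using open_map_compose[OF open_map_nat_pow[OF fin_index[OF that]] open_map_into_Lam_top[of 1]]
    by (simp add: o_def Nx_def)
  then show "open_map (Lam_top Tx) (subtopology (Lam_top Tx) (obj_space (Lam_top Tx) Lam_d)) (Lam_s G)"
    unfolding obj_space_Lam
    by (intro open_map_into_subtopology open_map_from_Lam_top) (auto simp: Nx_def)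
  fix l assume "l \<in> topspace (Lam_top Tx)"
  then obtain a g where l: "l = (a, g)" "a \<in> Nx" "g \<in> carrier G"
    by auto
  then obtain W where W: "openin Tx W" "g \<in> W" "inj_on (\<lambda>x. x [^] a) W"
    using locally_inj_on_nat_pow fin_ker by blast
  then show "\<exists>U. openin (Lam_top Tx) U \<and> l \<in> U \<and> inj_on (Lam_s G) U"
    using l by (intro exI[of _ "{a} \<times> W"]) (auto simp: openin_Lam_top_Times inj_on_def)
qed

lemma topological_Nx_graph_Lam:
  assumes "\<And>a. a \<in> Nx \<Longrightarrow> finite (rcosets (pow_image G a))"
    and "\<And>a. a \<in> Nx \<Longrightarrow> finite (pow_ker G a)"
  shows "topological_Nx_graph (Lam_top Tx) Lam_r (Lam_s G) Lam_comp Lam_d"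
proof -
  have Ob: "obj_space (Lam_top Tx) Lam_d = {1} \<times> carrier G"
    by (simp add: obj_space_Lam)
  have Hausdorff_Lam: "Hausdorff_space (Lam_top Tx)"
    by (simp add: Hausdorff_space_Lam_top Hausdorff)
  have locally_compact_Lam: "locally_compact_space (Lam_top Tx)"
    by (simp add: locally_compact_space_Lam_top compact_imp_locally_compact_space compact_space)
  have locally_compact_Ob: "locally_compact_space (subtopology (Lam_top Tx) (obj_space (Lam_top Tx) Lam_d))"
    using compact_space_subtopology[OF compactin_Lam_top_slice[OF compact_space, of 1]]
    by (simp add: obj_space_Lam Nx_def compact_imp_locally_compact_space)
  show ?thesis
    unfolding topological_Nx_graph_def Let_def
    by (intro conjI Hausdorff_space_subtopology continuous_map_Lam_r continuous_map_Lam_d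
        continuous_map_Lam_comp open_map_Lam_comp local_homeo_map_Lam_s assms
        Hausdorff_Lam locally_compact_Lam locally_compact_Ob ballI impI Lam_unique_factorisation)
      (auto simp: Ob composable_def Nx_def mult.assoc nat_pow_pow split_paired_all)
qed

end

theorem proposition3p2:
  fixes G :: "('g, 'b) monoid_scheme" and Tx :: "'g topology"
  assumes "comm_group G"
    and "topspace Tx = carrier G"
    and "compact_space Tx" and "Hausdorff_space Tx"
    and "continuous_map (prod_topology Tx Tx) Tx (\<lambda>(x, y). x \<otimes>\<^bsub>G\<^esub> y)"
    and "continuous_map Tx Tx (\<lambda>x. inv\<^bsub>G\<^esub> x)"
    and "\<And>a. a \<in> Nx \<Longrightarrow> finite (rcosets\<^bsub>G\<^esub> (pow_image G a))"
    and "\<And>a. a \<in> Nx \<Longrightarrow> finite (pow_ker G a)"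
    and "\<And>a b. a \<in> Nx \<Longrightarrow> b \<in> Nx \<Longrightarrow>
           card (pow_ker G (a * b)) = card (pow_ker G a) * card (pow_ker G b)"
  shows "topological_Nx_graph (Lam_top Tx) Lam_r (Lam_s G) Lam_comp Lam_d \<and>
         row_finite_no_sources (Lam_top Tx) Lam_r Lam_d"
proof -
  interpret topological_group G Tx
    using assms(1,2,5,6) comm_group.axioms(2)
    by (simp add: topological_group_def topological_group_axioms_def)
  interpret compact_abelian_group G Tx
    using assms(1,3,4) by (simp add: compact_abelian_group_def compact_abelian_group_axioms_def
        topological_group_axioms)
  show ?thesis
    using topological_Nx_graph_Lam[OF assms(7,8)] row_finite_no_sources_Lam assms(3,4) by blast
qed

end
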